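(* Let $\mathcal G$ be a graph on $n$ vertices with graph-state distance $d'(\mathcal G)$, and let $k\ge1$ and $d\ge1$ be integers with $d\le d'(\mathcal G)$ and $$\sum_{s=1}^{d-1}3^s\binom{n}{s}<\frac{2^n-1}{2^k-1}.$$ Then there exists a linear binary code $\mathcal C\subseteq\mathbb F_2^n$ of dimension $k$ such that the additive CWS code $\mathcal Q=(\mathcal G,\mathcal C)$ (an $[[n,k]]$ stabilizer code, of dimension $2^k$) has distance at least $d$ and is pure: for every Pauli operator $E$ not proportional to the identity with $\mathrm{wgt}(E)<d$ and all $|\psi\rangle,|\varphi\rangle\in\mathcal Q$ one has $\langle\varphi|E|\psi\rangle=0$. In particular, $[[n,k,d]]$ codes with $d=\min\{d_{GV},d'(\mathcal G)\}$ exist for the graph $\mathcal G$, where $d_{GV}$ is the largest $d$ satisfying the displayed inequality.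
   Context: A Pauli operator on $n$ qubits is, up to a phase, $X^{\mathbf v}Z^{\mathbf u}$ with $\mathbf v,\mathbf u\in\{0,1\}^n$; its weight is the number of qubits on which it acts nontrivially. For a subspace $\mathcal Q$ with orthonormal basis $\{|i\rangle\}$, $E$ is detectable if $\langle j|E|i\rangle=C_E\delta_{ij}$ with $C_E$ independent of $i,j$; the distance is the smallest weight of a non-detectable Pauli operator. Let $\mathcal G$ be a simple graph on $\{1,\dots,n\}$ with adjacency matrix $R$ (symmetric, zero diagonal) and rows $\mathbf r_i$; $S_i=X_iZ^{\mathbf r_i}$ are the graph-stabilizer generators, generating the abelian group $\mathscr S_{\mathcal G}$ with unique stabilized state (graph state) $|s\rangle$. The graph-state distance $d'(\mathcal G)$ is the minimum weight of an element of $\mathscr S_{\mathcal G}$ not proportional to the identity. For a binary code $\mathcal C$, the CWS code is $(\mathcal G,\mathcal C)=\operatorname{span}\{Z^{\mathbf c}|s\rangle:\mathbf c\in\mathcal C\}$. *)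

theory Defs
  imports Complex_Main
begin

text \<open>Binary vectors in F_2^n are functions nat => bool vanishing outside {0..<n}.
  Qubits / vertices are indexed 0..n-1.\<close>

type_synonym bvec = "nat \<Rightarrow> bool"

definition vecs :: "nat \<Rightarrow> bvec set" where
  "vecs n = {x. \<forall>i. n \<le> i \<longrightarrow> \<not> x i}"

definition vzero :: bvec where "vzero = (\<lambda>_. False)"

definition vadd :: "bvec \<Rightarrow> bvec \<Rightarrow> bvec" where
  "vadd x y = (\<lambda>i. x i \<noteq> y i)"

definition unitv :: "nat \<Rightarrow> bvec" where
  "unitv i = (\<lambda>j. j = i)"

definition dotp :: "nat \<Rightarrow> bvec \<Rightarrow> bvec \<Rightarrow> bool" where
  "dotp n u x = odd (card {i. i < n \<and> u i \<and> x i})"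

text \<open>n-qubit states: complex amplitudes on the computational basis {|x>, x in F_2^n}\<close>
type_synonym qstate = "bvec \<Rightarrow> complex"

definition qinner :: "nat \<Rightarrow> qstate \<Rightarrow> qstate \<Rightarrow> complex" where
  "qinner n phi psi = (\<Sum>x\<in>vecs n. cnj (phi x) * psi x)"

text \<open>Pauli operator X^v Z^u: Z^u|x> = (-1)^(u.x)|x>, X^v|x> = |x+v>.\<close>
definition pauli :: "nat \<Rightarrow> bvec \<Rightarrow> bvec \<Rightarrow> qstate \<Rightarrow> qstate" where
  "pauli n v u psi = (\<lambda>y. (if dotp n u (vadd y v) then -1 else 1) * psi (vadd y v))"

definition wgt :: "nat \<Rightarrow> bvec \<Rightarrow> bvec \<Rightarrow> nat" where
  "wgt n v u = card {i. i < n \<and> (v i \<or> u i)}"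

definition simple_graph :: "nat \<Rightarrow> (nat \<Rightarrow> nat \<Rightarrow> bool) \<Rightarrow> bool" where
  "simple_graph n E = (\<forall>i<n. \<forall>j<n. (E i j = E j i) \<and> \<not> E i i)"

definition adj_row :: "nat \<Rightarrow> (nat \<Rightarrow> nat \<Rightarrow> bool) \<Rightarrow> nat \<Rightarrow> bvec" where
  "adj_row n E i = (\<lambda>j. j < n \<and> E i j)"

text \<open>The graph-stabilizer group, with Pauli operators taken modulo phases (pairs (v,u)
  standing for X^v Z^u); it is generated by S_i = X_i Z^(r_i). Multiplication of
  Paulis modulo phase is componentwise addition over F_2.\<close>
inductive_set stab_group :: "nat \<Rightarrow> (nat \<Rightarrow> nat \<Rightarrow> bool) \<Rightarrow> (bvec \<times> bvec) set"
  for n E where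
  one: "(vzero, vzero) \<in> stab_group n E"
| mult: "P \<in> stab_group n E \<Longrightarrow> i < n \<Longrightarrow>
          (vadd (fst P) (unitv i), vadd (snd P) (adj_row n E i)) \<in> stab_group n E"

definition graph_state_distance :: "nat \<Rightarrow> (nat \<Rightarrow> nat \<Rightarrow> bool) \<Rightarrow> nat" where
  "graph_state_distance n E =
     Min {wgt n v u | v u. (v, u) \<in> stab_group n E \<and> (v, u) \<noteq> (vzero, vzero)}"

definition is_graph_state :: "nat \<Rightarrow> (nat \<Rightarrow> nat \<Rightarrow> bool) \<Rightarrow> qstate \<Rightarrow> bool" where
  "is_graph_state n E s =
     ((\<forall>x. x \<notin> vecs n \<longrightarrow> s x = 0) \<and> (\<exists>x\<in>vecs n. s x \<noteq> 0) \<and>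
      (\<forall>i<n. pauli n (unitv i) (adj_row n E i) s = s))"

definition qspan :: "qstate set \<Rightarrow> qstate set" where
  "qspan B = {psi. \<exists>a. psi = (\<lambda>y. \<Sum>b\<in>B. a b * b y)}"

definition cws_code :: "nat \<Rightarrow> qstate \<Rightarrow> bvec set \<Rightarrow> qstate set" where
  "cws_code n s C = qspan ((\<lambda>c. pauli n vzero c s) ` C)"

definition linear_code :: "nat \<Rightarrow> nat \<Rightarrow> bvec set \<Rightarrow> bool" where
  "linear_code n k C = (C \<subseteq> vecs n \<and> vzero \<in> C \<and>
      (\<forall>x\<in>C. \<forall>y\<in>C. vadd x y \<in> C) \<and> card C = 2 ^ k)"

definition orthonormal_basis :: "nat \<Rightarrow> qstate set \<Rightarrow> qstate set \<Rightarrow> bool" where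
  "orthonormal_basis n Q B = (finite B \<and> B \<subseteq> Q \<and> qspan B = Q \<and>
      (\<forall>b\<in>B. \<forall>b'\<in>B. qinner n b b' = (if b = b' then 1 else 0)))"

definition detectable :: "nat \<Rightarrow> qstate set \<Rightarrow> bvec \<Rightarrow> bvec \<Rightarrow> bool" where
  "detectable n Q v u = (\<forall>B. orthonormal_basis n Q B \<longrightarrow>
      (\<exists>c. \<forall>i\<in>B. \<forall>j\<in>B. qinner n j (pauli n v u i) = (if i = j then c else 0)))"

definition distance_ge :: "nat \<Rightarrow> qstate set \<Rightarrow> nat \<Rightarrow> bool" where
  "distance_ge n Q d = (\<forall>v\<in>vecs n. \<forall>u\<in>vecs n. wgt n v u < d \<longrightarrow> detectable n Q v u)"

definition pure_code :: "nat \<Rightarrow> qstate set \<Rightarrow> nat \<Rightarrow> bool" where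
  "pure_code n Q d = (\<forall>v\<in>vecs n. \<forall>u\<in>vecs n. (v, u) \<noteq> (vzero, vzero) \<longrightarrow> wgt n v u < d \<longrightarrow>
      (\<forall>psi\<in>Q. \<forall>phi\<in>Q. qinner n phi (pauli n v u psi) = 0))"

end

theory Submission
  imports Defs "HOL-Library.FuncSet"
begin

(* For a graph state |s> the only Paulis with nonzero expectation <s|X^v Z^w|s> are those
   with w = R v, the "syndrome" of v (the adjacency matrix applied to v); these are exactly
   the stabilizers (v, R v).  For codewords c, c' one has
   <Z^c' s| X^v Z^u |Z^c s> = +-<s| X^v Z^(u+c+c') |s>, so the CWS code (G, C) is pure to
   distance d as soon as the linear code C avoids the "bad set"
     B = { u + R v : (v,u) nonzero of weight < d }.
   The bad set has at most sum_{s=1}^{d-1} 3^s (n choose s) elements, and it does not contain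
   0 because d <= d'(G).  A greedy construction (adjoin a vector outside V u (B + V)) yields a
   k-dimensional subspace avoiding B whenever (|B|+1) 2^k < 2^(n+1), which follows from the
   hypothesis of the theorem.  Purity finally implies distance >= d. *)

section \<open>Arithmetic in F_2^n\<close>

lemma dotp_Suc: "dotp (Suc n) u x = (dotp n u x \<noteq> (u n \<and> x n))"
proof (cases "u n \<and> x n")
  case True
  then have "{i. i < Suc n \<and> u i \<and> x i} = insert n {i. i < n \<and> u i \<and> x i}"
    by (auto simp: less_Suc_eq)
  then show ?thesis using True by (simp add: dotp_def)
next
  case False
  then have "{i. i < Suc n \<and> u i \<and> x i} = {i. i < n \<and> u i \<and> x i}"
    by (auto simp: less_Suc_eq)
  then show ?thesis using False by (simp add: dotp_def)
qed

lemma dotp_0 [simp]: "dotp 0 u x = False"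
  by (simp add: dotp_def)

lemma dotp_comm: "dotp n u x = dotp n x u"
  unfolding dotp_def by (simp add: conj_commute)

lemma dotp_vadd_right: "dotp n u (vadd x y) = (dotp n u x \<noteq> dotp n u y)"
  by (induction n) (auto simp: dotp_Suc vadd_def)

lemma dotp_vadd_left: "dotp n (vadd x y) u = (dotp n x u \<noteq> dotp n y u)"
  by (metis dotp_vadd_right dotp_comm)

lemma dotp_vzero [simp]: "dotp n vzero x = False" "dotp n x vzero = False"
  by (simp_all add: dotp_def vzero_def)

lemma dotp_unitv: "i < n \<Longrightarrow> dotp n w (unitv i) = w i"
  by (cases "w i") (auto simp: dotp_def unitv_def conj_commute cong: conj_cong)

lemma vadd_assoc: "vadd (vadd x y) z = vadd x (vadd y z)"
  by (auto simp: vadd_def)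

lemma vadd_self [simp]: "vadd x x = vzero" "vadd x (vadd x y) = y"
  and vadd_vzero [simp]: "vadd x vzero = x" "vadd vzero x = x"
  by (auto simp: vadd_def vzero_def)

lemma vadd_vecs: "x \<in> vecs n \<Longrightarrow> y \<in> vecs n \<Longrightarrow> vadd x y \<in> vecs n"
  and vzero_vecs [simp]: "vzero \<in> vecs n"
  and unitv_vecs: "i < n \<Longrightarrow> unitv i \<in> vecs n"
  and adj_row_vecs: "adj_row n E i \<in> vecs n"
  by (auto simp: vecs_def vadd_def vzero_def unitv_def adj_row_def)

lemma vecs_eq_indicators: "vecs n = (\<lambda>T i. i \<in> T) ` Pow {..<n}"
proof
  show "vecs n \<subseteq> (\<lambda>T i. i \<in> T) ` Pow {..<n}"
  proof
    fix x assume "x \<in> vecs n"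
    then have "{i. x i} \<in> Pow {..<n}" by (auto simp: vecs_def not_le[symmetric])
    then show "x \<in> (\<lambda>T i. i \<in> T) ` Pow {..<n}" by (rule rev_image_eqI) simp
  qed
qed (auto simp: vecs_def)

lemma finite_vecs [simp]: "finite (vecs n)"
  by (simp add: vecs_eq_indicators)

lemma card_vecs: "card (vecs n) = 2 ^ n"
proof -
  have "inj_on (\<lambda>T i. i \<in> (T::nat set)) (Pow {..<n})"
    by (auto simp: inj_on_def fun_eq_iff)
  then show ?thesis by (simp add: vecs_eq_indicators card_image card_Pow)
qed

lemma wgt_eq_0:
  assumes "v \<in> vecs n" "u \<in> vecs n" "wgt n v u = 0"
  shows "v = vzero \<and> u = vzero"
proof -
  have "{i. i < n \<and> (v i \<or> u i)} = {}" using assms(3) by (simp add: wgt_def)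
  then show ?thesis using assms(1,2) by (auto simp: vecs_def vzero_def fun_eq_iff) (meson not_le)+
qed

section \<open>Pauli calculus\<close>

definition parity_sign :: "bool \<Rightarrow> complex" where
  "parity_sign b = (if b then -1 else 1)"

lemma cnj_parity_sign [simp]: "cnj (parity_sign b) = parity_sign b"
  by (simp add: parity_sign_def)

lemma pauli_parity_sign:
  "pauli n v u psi = (\<lambda>y. parity_sign (dotp n u (vadd y v)) * psi (vadd y v))"
  by (simp add: pauli_def parity_sign_def)

lemma pauli_identity: "pauli n vzero vzero psi = psi"
  by (simp add: pauli_def)

lemma sum_vecs_translate:
  assumes "a \<in> vecs n"
  shows "(\<Sum>y\<in>vecs n. f y) = (\<Sum>z\<in>vecs n. f (vadd z a))"
  by (rule sum.reindex_bij_witness[where i="\<lambda>z. vadd z a" and j="\<lambda>y. vadd y a"])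
     (auto simp: assms vadd_vecs vadd_assoc)

lemma pauli_adjoint:
  assumes "a \<in> vecs n"
  shows "qinner n (pauli n a b phi) psi = parity_sign (dotp n b a) * qinner n phi (pauli n a b psi)"
proof -
  have "qinner n (pauli n a b phi) psi
      = (\<Sum>z\<in>vecs n. cnj (parity_sign (dotp n b (vadd (vadd z a) a)) * phi (vadd (vadd z a) a))
                      * psi (vadd z a))"
    unfolding qinner_def pauli_parity_sign by (rule sum_vecs_translate[OF assms])
  also have "\<dots> = (\<Sum>z\<in>vecs n. parity_sign (dotp n b a)
                   * (cnj (phi z) * (parity_sign (dotp n b (vadd z a)) * psi (vadd z a))))"
    by (rule sum.cong) (auto simp: vadd_assoc dotp_vadd_right parity_sign_def)
  also have "\<dots> = parity_sign (dotp n b a) * qinner n phi (pauli n a b psi)"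
    by (simp add: qinner_def pauli_parity_sign sum_distrib_left)
  finally show ?thesis .
qed

lemma pauli_commute:
  "pauli n a b (pauli n v w psi)
     = (\<lambda>y. parity_sign (dotp n b v \<noteq> dotp n w a) * pauli n v w (pauli n a b psi) y)"
proof
  fix y
  have "vadd (vadd y a) v = vadd (vadd y v) a" by (auto simp: vadd_def)
  then show "pauli n a b (pauli n v w psi) y
      = parity_sign (dotp n b v \<noteq> dotp n w a) * pauli n v w (pauli n a b psi) y"
    unfolding pauli_parity_sign by (auto simp: dotp_vadd_right parity_sign_def vadd_assoc)
qed

lemma pauli_Z_right: "pauli n v u (pauli n vzero c psi) = pauli n v (vadd u c) psi"
  by (auto simp: pauli_parity_sign dotp_vadd_left parity_sign_def)

lemma pauli_Z_left:
  "pauli n vzero c (pauli n v w psi) = (\<lambda>y. parity_sign (dotp n c v) * pauli n v (vadd w c) psi y)"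
  by (auto simp: pauli_parity_sign dotp_vadd_left dotp_vadd_right parity_sign_def dotp_comm[of n c])

lemma qinner_scale_right: "qinner n phi (\<lambda>y. c * f y) = c * qinner n phi f"
  by (simp add: qinner_def sum_distrib_left mult_ac)

lemma qinner_sum_right:
  "qinner n phi (\<lambda>y. \<Sum>b\<in>B. c b * g b y) = (\<Sum>b\<in>B. c b * qinner n phi (g b))"
  unfolding qinner_def by (simp add: sum_distrib_left mult_ac sum.swap[of _ B])

lemma qinner_sum_left:
  "qinner n (\<lambda>y. \<Sum>b\<in>B. c b * b y) g = (\<Sum>b\<in>B. cnj (c b) * qinner n b g)"
  unfolding qinner_def
  by (simp add: sum_distrib_left sum_distrib_right mult_ac sum.swap[of _ B])

lemma pauli_sum:
  "pauli n v u (\<lambda>y. \<Sum>b\<in>B. c b * g b y) = (\<lambda>y. \<Sum>b\<in>B. c b * pauli n v u (g b) y)"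
  by (simp add: pauli_parity_sign sum_distrib_left mult_ac)

lemma qinner_pauli_span_zero:
  assumes "\<forall>b\<in>B. \<forall>b'\<in>B. qinner n b' (pauli n v u b) = 0"
    and "psi \<in> qspan B" and "phi \<in> qspan B"
  shows "qinner n phi (pauli n v u psi) = 0"
proof -
  obtain a a' where a: "psi = (\<lambda>y. \<Sum>b\<in>B. a b * b y)" and a': "phi = (\<lambda>y. \<Sum>b\<in>B. a' b * b y)"
    using assms(2,3) by (auto simp: qspan_def)
  have "qinner n phi (pauli n v u psi) = (\<Sum>b\<in>B. a b * qinner n phi (pauli n v u b))"
    unfolding a pauli_sum qinner_sum_right ..
  also have "\<dots> = 0"
    unfolding a' qinner_sum_left using assms(1) by simp
  finally show ?thesis .
qed

section \<open>The graph stabilizer and its syndrome map\<close>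

lemma stab_group_vecs: "P \<in> stab_group n E \<Longrightarrow> fst P \<in> vecs n \<and> snd P \<in> vecs n"
  by (induction rule: stab_group.induct) (auto simp: vadd_vecs unitv_vecs adj_row_vecs)

text \<open>The syndrome R v: the Z-part of the stabilizer element with X-part v.\<close>

definition syndrome :: "nat \<Rightarrow> (nat \<Rightarrow> nat \<Rightarrow> bool) \<Rightarrow> bvec \<Rightarrow> bvec" where
  "syndrome n E v = (\<lambda>i. i < n \<and> dotp n (adj_row n E i) v)"

lemma syndrome_vecs: "syndrome n E v \<in> vecs n"
  by (simp add: syndrome_def vecs_def)

lemma stab_group_product:
  "m \<le> n \<Longrightarrow> v \<in> vecs m \<Longrightarrow> (v, \<lambda>i. i < n \<and> dotp m v (\<lambda>j. E j i)) \<in> stab_group n E"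
proof (induction m arbitrary: v)
  case 0
  then have "v = vzero" by (auto simp: vecs_def vzero_def)
  then show ?case using stab_group.one[of n E] by (simp add: vzero_def dotp_def)
next
  case (Suc m)
  let ?v' = "v(m := False)"
  have same: "dotp m ?v' c = dotp m v c" for c
    unfolding dotp_def by (rule arg_cong[where f="\<lambda>A. odd (card A)"]) auto
  have v': "?v' \<in> vecs m" using Suc.prems(2) by (auto simp: vecs_def le_Suc_eq)
  have IH: "(?v', \<lambda>i. i < n \<and> dotp m v (\<lambda>j. E j i)) \<in> stab_group n E"
    using Suc.IH[OF _ v'] Suc.prems(1) unfolding same by (simp add: fun_upd_def)
  show ?case
  proof (cases "v m")
    case True
    have "(vadd ?v' (unitv m), vadd (\<lambda>i. i < n \<and> dotp m v (\<lambda>j. E j i)) (adj_row n E m))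
          \<in> stab_group n E"
      using stab_group.mult[OF IH] Suc.prems(1) by simp
    moreover have "vadd ?v' (unitv m) = v" using True by (auto simp: vadd_def unitv_def)
    moreover have "vadd (\<lambda>i. i < n \<and> dotp m v (\<lambda>j. E j i)) (adj_row n E m)
        = (\<lambda>i. i < n \<and> dotp (Suc m) v (\<lambda>j. E j i))"
      using True by (auto simp: dotp_Suc vadd_def adj_row_def)
    ultimately show ?thesis by simp
  next
    case False
    then have "?v' = v" by (simp add: fun_eq_iff)
    with IH False show ?thesis by (simp add: dotp_Suc)
  qed
qed

text \<open>Since the adjacency relation is symmetric, row i of R applied to v is column i, so
  (v, R v) is the product of the generators selected by v.\<close>

lemma syndrome_in_stab_group:
  assumes "simple_graph n E" "v \<in> vecs n"
  shows "(v, syndrome n E v) \<in> stab_group n E"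
proof -
  have "{j. j < n \<and> adj_row n E i j \<and> v j} = {j. j < n \<and> v j \<and> E j i}" if "i < n" for i
    using assms(1) that by (auto simp: adj_row_def simple_graph_def)
  then have "syndrome n E v = (\<lambda>i. i < n \<and> dotp n v (\<lambda>j. E j i))"
    by (auto simp: syndrome_def dotp_def fun_eq_iff)
  then show ?thesis using stab_group_product[OF le_refl assms(2)] by simp
qed

lemma graph_state_distance_le:
  assumes "(v, u) \<in> stab_group n E" "(v, u) \<noteq> (vzero, vzero)"
  shows "graph_state_distance n E \<le> wgt n v u"
proof -
  have "{wgt n v u | v u. (v, u) \<in> stab_group n E \<and> (v, u) \<noteq> (vzero, vzero)}
        \<subseteq> (\<lambda>(v, u). wgt n v u) ` (vecs n \<times> vecs n)"
    using stab_group_vecs by fastforce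
  then have "finite {wgt n v u | v u. (v, u) \<in> stab_group n E \<and> (v, u) \<noteq> (vzero, vzero)}"
    by (rule finite_subset) simp
  then show ?thesis unfolding graph_state_distance_def
    by (rule Min_le) (use assms in blast)
qed

text \<open>If X^v Z^w anticommutes with some generator S_i, its expectation in the graph state
  vanishes: <s|P|s> = <S_i s|P|s> = <s|S_i P|s> = -<s|P S_i|s> = -<s|P|s>.\<close>

lemma graph_state_anticommuting_zero:
  assumes gs: "is_graph_state n E s" and sgr: "simple_graph n E" and i: "i < n"
    and anti: "dotp n (adj_row n E i) v \<noteq> w i"
  shows "qinner n s (pauli n v w s) = 0"
proof -
  let ?S = "pauli n (unitv i) (adj_row n E i)"
  have Ss: "?S s = s" using gs i by (simp add: is_graph_state_def)
  have "dotp n (adj_row n E i) (unitv i) = False"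
    using i sgr by (simp add: dotp_unitv adj_row_def simple_graph_def)
  then have "qinner n s (pauli n v w s) = qinner n s (?S (pauli n v w s))"
    using pauli_adjoint[OF unitv_vecs[OF i], of "adj_row n E i" s] Ss by (simp add: parity_sign_def)
  also have "?S (pauli n v w s) = (\<lambda>y. - pauli n v w s y)"
    unfolding pauli_commute Ss using anti i by (simp add: parity_sign_def dotp_unitv)
  also have "qinner n s \<dots> = - qinner n s (pauli n v w s)"
    by (simp add: qinner_def sum_negf)
  finally show ?thesis by simp
qed

lemma graph_state_expectation_zero:
  assumes "is_graph_state n E s" "simple_graph n E"
    and "w \<in> vecs n" "w \<noteq> syndrome n E v"
  shows "qinner n s (pauli n v w s) = 0"
proof -
  obtain i where i: "w i \<noteq> syndrome n E v i" using assms(4) by (auto simp: fun_eq_iff)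
  have "i < n"
  proof (rule ccontr)
    assume "\<not> i < n"
    then show False using i assms(3) by (simp add: vecs_def syndrome_def)
  qed
  moreover have "dotp n (adj_row n E i) v \<noteq> w i" using i calculation by (simp add: syndrome_def)
  ultimately show ?thesis using graph_state_anticommuting_zero[OF assms(1,2)] by blast
qed

section \<open>Counting low-weight Paulis\<close>

text \<open>A Pauli of weight s is determined by its support (an s-subset) and, on the support,
  by one of the three nontrivial pairs (X, Z, Y).\<close>

lemma card_weight_eq:
  "card {(v, u). v \<in> vecs n \<and> u \<in> vecs n \<and> wgt n v u = s} \<le> 3 ^ s * (n choose s)"
proof -
  let ?P = "{(v, u). v \<in> vecs n \<and> u \<in> vecs n \<and> wgt n v u = s}"
  let ?A = "{A. A \<subseteq> {..<n} \<and> card A = s}"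
  let ?L = "{(True, False), (False, True), (True, True)}"
  let ?T = "Sigma ?A (\<lambda>A. A \<rightarrow>\<^sub>E ?L)"
  define supp where "supp = (\<lambda>v u. {i. i < n \<and> (v i \<or> u i)})"
  define f where "f = (\<lambda>(v, u). (supp v u, restrict (\<lambda>i. (v i, u i)) (supp v u)))"
  have finA: "finite ?A" by (rule finite_subset[of _ "Pow {..<n}"]) auto
  have "card ?T = (\<Sum>A\<in>?A. card (A \<rightarrow>\<^sub>E ?L))"
    using finA by (intro card_SigmaI) (auto intro!: finite_PiE dest: finite_subset[OF _ finite_lessThan])
  also have "\<dots> = (\<Sum>A\<in>?A. 3 ^ s)"
  proof (intro sum.cong refl)
    fix A assume "A \<in> ?A"
    then have "finite A" "card A = s" by (auto dest: finite_subset[OF _ finite_lessThan])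
    then show "card (A \<rightarrow>\<^sub>E ?L) = 3 ^ s" by (simp add: card_PiE numeral_3_eq_3)
  qed
  also have "\<dots> = 3 ^ s * (n choose s)" using n_subsets[of "{..<n}" s] by simp
  finally have card_T: "card ?T = 3 ^ s * (n choose s)" .
  have inj: "inj_on f ?P"
  proof (rule inj_onI)
    fix x y assume "x \<in> ?P" "y \<in> ?P" "f x = f y"
    moreover obtain v u v' u' where xy: "x = (v, u)" "y = (v', u')" by fastforce
    ultimately have vu: "(v, u) \<in> ?P" "(v', u') \<in> ?P" and "f (v, u) = f (v', u')" by simp_all
    then have S: "supp v u = supp v' u'"
      and R: "restrict (\<lambda>i. (v i, u i)) (supp v u) = restrict (\<lambda>i. (v' i, u' i)) (supp v u)"
      by (auto simp: f_def)
    have "v i = v' i \<and> u i = u' i" for i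
    proof (cases "i \<in> supp v u")
      case True then show ?thesis using fun_cong[OF R, of i] by simp
    next
      case False
      then have "i \<notin> supp v' u'" using S by simp
      with False show ?thesis using vu by (cases "i < n") (auto simp: supp_def vecs_def)
    qed
    then show "x = y" using xy by (simp add: fun_eq_iff)
  qed
  moreover have image: "f ` ?P \<subseteq> ?T"
  proof
    fix z assume "z \<in> f ` ?P"
    then obtain v u where vu: "(v, u) \<in> ?P" and z: "z = f (v, u)" by blast
    have "supp v u \<in> ?A" using vu by (auto simp: supp_def wgt_def)
    moreover have "restrict (\<lambda>i. (v i, u i)) (supp v u) \<in> supp v u \<rightarrow>\<^sub>E ?L"
      unfolding restrict_PiE_iff by (auto simp: supp_def)
    ultimately show "z \<in> ?T" unfolding z f_def by simp
  qed
  moreover have "finite ?T"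
    using finA by (auto intro!: finite_PiE dest: finite_subset[OF _ finite_lessThan])
  ultimately show ?thesis using card_inj_on_le[OF inj image] card_T by simp
qed

text \<open>The bad set: a linear code C yields a pure CWS code of distance d if C misses it
  (see cws_pure_if_avoids_badset below).\<close>

definition badset :: "nat \<Rightarrow> (nat \<Rightarrow> nat \<Rightarrow> bool) \<Rightarrow> nat \<Rightarrow> bvec set" where
  "badset n E d = (\<lambda>(v, u). vadd u (syndrome n E v)) `
     {(v, u). v \<in> vecs n \<and> u \<in> vecs n \<and> (v, u) \<noteq> (vzero, vzero) \<and> wgt n v u < d}"

lemma badset_vecs: "badset n E d \<subseteq> vecs n"
  unfolding badset_def using vadd_vecs syndrome_vecs by auto

text \<open>Each bad vector comes from a nonzero Pauli of weight between 1 and d-1.\<close>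

lemma card_badset: "card (badset n E d) \<le> (\<Sum>s=1..d-1. 3 ^ s * (n choose s))"
proof -
  let ?Pd = "{(v, u). v \<in> vecs n \<and> u \<in> vecs n \<and> (v, u) \<noteq> (vzero, vzero) \<and> wgt n v u < d}"
  let ?Ps = "\<lambda>s. {(v, u). v \<in> vecs n \<and> u \<in> vecs n \<and> wgt n v u = s}"
  have "?Pd \<subseteq> (\<Union>s\<in>{1..d-1}. ?Ps s)"
  proof
    fix p assume "p \<in> ?Pd"
    then obtain v u where p: "p = (v, u)"
      and vu: "v \<in> vecs n" "u \<in> vecs n" "(v, u) \<noteq> (vzero, vzero)" "wgt n v u < d" by blast
    then have "wgt n v u \<in> {1..d-1}" using wgt_eq_0[OF vu(1,2)] by fastforce
    then show "p \<in> (\<Union>s\<in>{1..d-1}. ?Ps s)" using vu p by blast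
  qed
  moreover have "finite (\<Union>s\<in>{1..d-1}. ?Ps s)"
    by (rule finite_subset[of _ "vecs n \<times> vecs n"]) auto
  ultimately have "card ?Pd \<le> card (\<Union>s\<in>{1..d-1}. ?Ps s)" by (rule card_mono[rotated])
  moreover have "card (badset n E d) \<le> card ?Pd"
    unfolding badset_def by (rule card_image_le, rule finite_subset[of _ "vecs n \<times> vecs n"]) auto
  moreover have "card (\<Union>s\<in>{1..d-1}. ?Ps s) \<le> (\<Sum>s\<in>{1..d-1}. card (?Ps s))"
    by (rule card_UN_le) simp
  moreover have "\<dots> \<le> (\<Sum>s=1..d-1. 3 ^ s * (n choose s))"
    by (rule sum_mono) (rule card_weight_eq)
  ultimately show ?thesis by linarith
qed

text \<open>0 is not bad: otherwise a nontrivial stabilizer of weight < d <= d'(G) would exist.\<close>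

lemma vzero_notin_badset:
  assumes "simple_graph n E" and "d \<le> graph_state_distance n E"
  shows "vzero \<notin> badset n E d"
proof
  assume "vzero \<in> badset n E d"
  then obtain v u where vu: "v \<in> vecs n" "(v, u) \<noteq> (vzero, vzero)" "wgt n v u < d"
    and "vzero = vadd u (syndrome n E v)" unfolding badset_def by auto
  then have "u = syndrome n E v" by (auto simp: vadd_def vzero_def fun_eq_iff)
  then have "(v, u) \<in> stab_group n E" using syndrome_in_stab_group[OF assms(1) vu(1)] by simp
  then show False using graph_state_distance_le vu(2,3) assms(2) by fastforce
qed

section \<open>Greedy construction of a subspace avoiding a set\<close>

definition binary_subspace :: "nat \<Rightarrow> bvec set \<Rightarrow> bool" where
  "binary_subspace n V = (V \<subseteq> vecs n \<and> vzero \<in> V \<and> (\<forall>x\<in>V. \<forall>y\<in>V. vadd x y \<in> V))"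

lemma binary_subspace_extend:
  assumes V: "binary_subspace n V" and x: "x \<in> vecs n" "x \<notin> V" and fin: "finite V"
  shows "binary_subspace n (V \<union> vadd x ` V)" "card (V \<union> vadd x ` V) = 2 * card V"
proof -
  have closed: "\<And>a b. a \<in> V \<Longrightarrow> b \<in> V \<Longrightarrow> vadd a b \<in> V" using V by (simp add: binary_subspace_def)
  have "V \<inter> vadd x ` V = {}"
  proof (rule ccontr)
    assume "V \<inter> vadd x ` V \<noteq> {}"
    then obtain a where "a \<in> V" "vadd x a \<in> V" by blast
    then have "vadd (vadd x a) a \<in> V" using closed by blast
    then show False using x(2) by (simp add: vadd_assoc)
  qed
  moreover have "inj_on (vadd x) V" by (rule inj_onI) (metis vadd_self(2))
  ultimately show "card (V \<union> vadd x ` V) = 2 * card V"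
    using fin by (simp add: card_Un_disjoint card_image)
  have member: "y \<in> V \<union> vadd x ` V \<longleftrightarrow> y \<in> V \<or> vadd x y \<in> V" for y
    by (auto simp: image_iff) (metis vadd_self(2))
  have "vadd a b \<in> V \<union> vadd x ` V" if "a \<in> V \<union> vadd x ` V" "b \<in> V \<union> vadd x ` V" for a b
  proof -
    have "vadd x (vadd a b) = vadd a (vadd x b)" "vadd x (vadd a b) = vadd (vadd x a) b"
      "vadd a b = vadd (vadd x a) (vadd x b)"
      by (auto simp: vadd_def)
    then show ?thesis using that closed unfolding member by metis
  qed
  then show "binary_subspace n (V \<union> vadd x ` V)"
    using V x(1) vadd_vecs by (auto simp: binary_subspace_def)
qed

text \<open>Greedy step: V u (S + V) has at most (|S|+1)|V| elements, so while this is below 2^n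
  some x avoids it, and then V u (x + V) still misses S.\<close>

lemma binary_subspace_avoiding:
  assumes finS: "finite S" and S0: "vzero \<notin> S"
    and bound: "(card S + 1) * 2 ^ k < 2 * 2 ^ n"
  shows "j \<le> k \<Longrightarrow> \<exists>V. binary_subspace n V \<and> card V = 2 ^ j \<and> V \<inter> S = {}"
proof (induction j)
  case 0
  show ?case using S0 by (intro exI[of _ "{vzero}"]) (auto simp: binary_subspace_def)
next
  case (Suc j)
  obtain V where V: "binary_subspace n V" "card V = 2 ^ j" "V \<inter> S = {}"
    using Suc.IH Suc.prems Suc_leD by blast
  have finV: "finite V" using V(1) finite_subset[OF _ finite_vecs] unfolding binary_subspace_def by blast
  define SV where "SV = (\<lambda>(s, w). vadd s w) ` (S \<times> V)"
  have "card SV \<le> card (S \<times> V)" unfolding SV_def by (rule card_image_le) (simp add: finS finV)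
  then have "card (V \<union> SV) \<le> (card S + 1) * 2 ^ j"
    using card_Un_le[of V SV] V(2) by (simp add: card_cartesian_product)
  moreover have "2 * ((card S + 1) * 2 ^ j) = (card S + 1) * 2 ^ Suc j" by simp
  moreover have "\<dots> \<le> (card S + 1) * 2 ^ k"
    using power_increasing[OF Suc.prems, of "2::nat"] by (intro mult_le_mono2) simp
  ultimately have small: "card (V \<union> SV) < card (vecs n)" using bound by (simp add: card_vecs)
  have "\<not> vecs n \<subseteq> V \<union> SV"
  proof
    assume "vecs n \<subseteq> V \<union> SV"
    moreover have "finite (V \<union> SV)" using finV finS unfolding SV_def by simp
    ultimately have "card (vecs n) \<le> card (V \<union> SV)" by (intro card_mono)
    then show False using small by simp
  qed
  then obtain x where x: "x \<in> vecs n" "x \<notin> V" "x \<notin> SV" by blast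
  have "(V \<union> vadd x ` V) \<inter> S = {}"
  proof (rule ccontr)
    assume "(V \<union> vadd x ` V) \<inter> S \<noteq> {}"
    then obtain a where "a \<in> V" "vadd x a \<in> S" using V(3) by blast
    then have "vadd (vadd x a) a \<in> SV" unfolding SV_def by (intro image_eqI[of _ _ "(vadd x a, a)"]) simp_all
    then show False using x(3) by (simp add: vadd_assoc)
  qed
  then show ?case using binary_subspace_extend[OF V(1) x(1,2) finV] V(2)
    by (intro exI[of _ "V \<union> vadd x ` V"]) simp
qed

lemma gv_bound:
  fixes a n k :: nat
  assumes k: "1 \<le> k" "k \<le> n" and a: "real a < (2 ^ n - 1) / (2 ^ k - 1)"
  shows "(a + 1) * 2 ^ k < 2 * (2::nat) ^ n"
proof -
  define K :: real where "K = 2 ^ k"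
  define N :: real where "N = 2 ^ n"
  have "(2::real) ^ 1 \<le> 2 ^ k" using k(1) by (rule power_increasing) simp
  then have K2: "2 \<le> K" unfolding K_def by simp
  have KN: "K \<le> N" unfolding K_def N_def using k(2) by (simp add: power_increasing)
  have aK: "real a * (K - 1) < N - 1"
    using a K2 unfolding K_def N_def by (simp add: pos_less_divide_eq)
  text \<open>(K-1)(a+K-N-1) = a(K-1) - (N-1) - (K-2)(N-K) < 0, hence a + K < N + 1.\<close>
  have "(K - 1) * (real a + K - N - 1) = real a * (K - 1) - (N - 1) - (K - 2) * (N - K)"
    by (simp add: algebra_simps)
  moreover have "0 \<le> (K - 2) * (N - K)" using K2 KN by simp
  ultimately have "(K - 1) * (real a + K - N - 1) < 0" using aK by linarith
  then have "real a + K < N + 1" using K2 by (simp add: mult_less_0_iff)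
  moreover have "(real a + 1) * K = real a * (K - 1) + real a + K" by (simp add: algebra_simps)
  ultimately have "(real a + 1) * K < 2 * N" using aK by linarith
  then have "real ((a + 1) * 2 ^ k) < real (2 * 2 ^ n)" unfolding K_def N_def by (simp add: algebra_simps)
  then show ?thesis by (simp only: of_nat_less_iff)
qed

section \<open>Purity and distance of the CWS code\<close>

lemma cws_matrix_element:
  "qinner n (pauli n vzero c' s) (pauli n v u (pauli n vzero c s))
     = parity_sign (dotp n c' v) * qinner n s (pauli n v (vadd (vadd u c) c') s)"
proof -
  have "qinner n (pauli n vzero c' s) (pauli n v u (pauli n vzero c s))
      = qinner n s (pauli n vzero c' (pauli n v (vadd u c) s))"
    using pauli_adjoint[of vzero n c' s] by (simp add: pauli_Z_right parity_sign_def)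
  then show ?thesis unfolding pauli_Z_left qinner_scale_right .
qed

text \<open>If C misses the bad set, every low-weight nontrivial Pauli has zero matrix elements
  between the basis states Z^c|s>: by cws_matrix_element they are graph-state expectations
  of X^v Z^(u+c+c'), and u+c+c' = R v would put c+c' in the bad set.\<close>

lemma cws_pure_if_avoids_badset:
  assumes sgr: "simple_graph n E" and gs: "is_graph_state n E s"
    and C: "binary_subspace n C" and avoid: "C \<inter> badset n E d = {}"
  shows "pure_code n (cws_code n s C) d"
  unfolding pure_code_def
proof (intro ballI impI)
  fix v u psi phi
  assume v: "v \<in> vecs n" and u: "u \<in> vecs n" and nz: "(v, u) \<noteq> (vzero, vzero)"
    and w: "wgt n v u < d" and psi: "psi \<in> cws_code n s C" and phi: "phi \<in> cws_code n s C"
  have zero: "qinner n (pauli n vzero c' s) (pauli n v u (pauli n vzero c s)) = 0"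
    if c: "c \<in> C" "c' \<in> C" for c c'
  proof -
    have cv: "c \<in> vecs n" "c' \<in> vecs n" "vadd c c' \<in> C" using C c by (auto simp: binary_subspace_def)
    have "vadd u (syndrome n E v) \<in> badset n E d"
      unfolding badset_def by (rule image_eqI[of _ _ "(v, u)"]) (use v u nz w in simp_all)
    moreover have "vadd u (syndrome n E v) = vadd c c'" if "vadd (vadd u c) c' = syndrome n E v"
      using that[symmetric] by (simp add: vadd_assoc)
    ultimately have "vadd (vadd u c) c' \<noteq> syndrome n E v" using avoid cv(3) by auto
    moreover have "vadd (vadd u c) c' \<in> vecs n" using u cv by (simp add: vadd_vecs)
    ultimately show ?thesis
      unfolding cws_matrix_element using graph_state_expectation_zero[OF gs sgr] by simp
  qed
  have "\<forall>b\<in>(\<lambda>c. pauli n vzero c s) ` C. \<forall>b'\<in>(\<lambda>c. pauli n vzero c s) ` C.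
          qinner n b' (pauli n v u b) = 0"
    using zero by blast
  then show "qinner n phi (pauli n v u psi) = 0"
    using psi phi unfolding cws_code_def by (rule qinner_pauli_span_zero)
qed

text \<open>Purity to distance d implies distance at least d: low-weight nontrivial Paulis have
  vanishing matrix (C_E = 0), and the identity has C_E = 1 on an orthonormal basis.\<close>

lemma pure_code_distance_ge:
  assumes "pure_code n Q d"
  shows "distance_ge n Q d"
  unfolding distance_ge_def detectable_def
proof (intro ballI impI allI)
  fix v u B
  assume vu: "v \<in> vecs n" "u \<in> vecs n" "wgt n v u < d" and B: "orthonormal_basis n Q B"
  show "\<exists>c. \<forall>i\<in>B. \<forall>j\<in>B. qinner n j (pauli n v u i) = (if i = j then c else 0)"
  proof (cases "(v, u) = (vzero, vzero)")
    case True
    then show ?thesis using B by (intro exI[of _ 1]) (auto simp: pauli_identity orthonormal_basis_def)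
  next
    case False
    then have "\<forall>i\<in>B. \<forall>j\<in>B. qinner n j (pauli n v u i) = 0"
      using assms B vu unfolding pure_code_def orthonormal_basis_def by blast
    then show ?thesis by (intro exI[of _ 0]) simp
  qed
qed

theorem mainTheorem6:
  fixes n k d :: nat and E :: "nat \<Rightarrow> nat \<Rightarrow> bool"
  assumes "simple_graph n E"
    and "1 \<le> k" and "k \<le> n" and "1 \<le> d"
    and "d \<le> graph_state_distance n E"
    and "(\<Sum>s=1..d-1. (3::real) ^ s * real (n choose s)) < (2 ^ n - 1) / (2 ^ k - 1)"
  shows "\<exists>C. linear_code n k C \<and>
           (\<forall>s. is_graph_state n E s \<longrightarrow>
              distance_ge n (cws_code n s C) d \<and> pure_code n (cws_code n s C) d)"
proof -
  let ?B = "badset n E d"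
  have "real (card ?B) \<le> real (\<Sum>s=1..d-1. 3 ^ s * (n choose s))"
    using card_badset[of n E d] by (simp only: of_nat_le_iff)
  also have "\<dots> = (\<Sum>s=1..d-1. (3::real) ^ s * real (n choose s))" by simp
  also note assms(6)
  finally have "(card ?B + 1) * 2 ^ k < 2 * 2 ^ n" by (rule gv_bound[OF assms(2,3)])
  then obtain C where C: "binary_subspace n C" "card C = 2 ^ k" "C \<inter> ?B = {}"
    using binary_subspace_avoiding[OF finite_subset[OF badset_vecs finite_vecs]
        vzero_notin_badset[OF assms(1,5)]] by blast
  then have "linear_code n k C" by (simp add: linear_code_def binary_subspace_def)
  moreover have "pure_code n (cws_code n s C) d" if "is_graph_state n E s" for s
    using cws_pure_if_avoids_badset[OF assms(1) that C(1,3)] .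
  ultimately show ?thesis using pure_code_distance_ge by blast
qed

end
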